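(* Let $K\in\mathbb{N}$, $\mathbf{A}=(A_1,\dots,A_K)$ with $A_k>0$, and $[\mathbf{0},\mathbf{A}]=\{\mathbf{x}\in\mathbb{R}^K:0\le x_k\le A_k,\ k=1,\dots,K\}$. Let $f\colon[\mathbf{0},\mathbf{A}]\to\mathbb{R}$ be $L$-Lipschitz continuous with respect to the $\ell_1$-norm and assume $f(\mathbf{y})=0$ for some $\mathbf{y}\in[\mathbf{0},\mathbf{A}]$. Then \[ \int_{[\mathbf{0},\mathbf{A}]}|f(\mathbf{x})|\,\lambda^K(\mathrm{d}\mathbf{x})\le\frac L2\Big(\prod_{k=1}^K A_k\Big)\Big(\sum_{k=1}^K A_k\Big). \] In particular, if $A_k=\varepsilon$ for all $k$, then $\int_{[0,\varepsilon]^K}|f(\mathbf{x})|\,\lambda^K(\mathrm{d}\mathbf{x})\le\varepsilon^{K+1}\frac{LK}{2}$.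
   Context: $\lambda^K$ is Lebesgue measure on $\mathbb{R}^K$; Lipschitz continuity is $|f(\mathbf{x})-f(\mathbf{x}')|\le L\|\mathbf{x}-\mathbf{x}'\|_1$. *)

theory Defs
  imports "HOL-Analysis.Analysis"
begin

end

theory Submission
  imports Defs
begin

text \<open>Reflecting the box through its centre, x \<mapsto> a + b - x, preserves the integral.
  For a Lipschitz f vanishing at y, the l1-distances from y to x and to a + b - x add up to
  at most the l1-diameter of the box in every coordinate, so |f x| + |f (a + b - x)| is
  bounded by L times that diameter. Integrating this bound, the integral of |f| is at most
  half of it times the volume.\<close>

lemma reflect_cbox_image:
  fixes a b :: "'a::euclidean_space"
  shows "(\<lambda>x. a + b - x) ` cbox a b = cbox a b"
  by (simp add: image_affinity_cbox[of "-1" "a + b" a b, simplified] algebra_simps)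

lemma has_integral_reflect_cbox:
  fixes f :: "'a::euclidean_space \<Rightarrow> 'b::real_normed_vector"
  assumes "(f has_integral I) (cbox a b)"
  shows "((\<lambda>x. f (a + b - x)) has_integral I) (cbox a b)"
  using has_integral_affinity[OF assms, of "-1" "a + b"] reflect_cbox_image[of a b]
  by (simp add: algebra_simps)

lemma set_integral_le_of_reflect_add_le:
  fixes g :: "'a::euclidean_space \<Rightarrow> real"
  assumes bound: "\<And>x. x \<in> cbox a b \<Longrightarrow> g x + g (a + b - x) \<le> C" and "0 \<le> C"
  shows "(LINT x : cbox a b | lborel. g x) \<le> C / 2 * measure lborel (cbox a b)"
proof (cases "set_integrable lborel (cbox a b) g")
  case False
  then have "(LINT x : cbox a b | lborel. g x) = 0"
    by (simp add: set_lebesgue_integral_def set_integrable_def not_integrable_integral_eq)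
  then show ?thesis using \<open>0 \<le> C\<close> by simp
next
  case True
  define I where "I = integral (cbox a b) g"
  have g: "(g has_integral I) (cbox a b)"
    using set_borel_integral_eq_integral(1)[OF True] unfolding I_def by blast
  have "((\<lambda>x. g x + g (a + b - x)) has_integral I + I) (cbox a b)"
    using has_integral_add[OF g has_integral_reflect_cbox[OF g]] .
  then have "I + I \<le> measure lborel (cbox a b) * C"
    using has_integral_le[OF _ has_integral_const bound] by simp
  then show ?thesis
    using set_borel_integral_eq_integral(2)[OF True] by (simp add: I_def field_simps)
qed

lemma abs_diff_add_abs_reflect_diff_le:
  fixes a b x y :: real
  assumes "a \<le> x" "x \<le> b" "a \<le> y" "y \<le> b"
  shows "\<bar>x - y\<bar> + \<bar>a + b - x - y\<bar> \<le> b - a"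
  using assms by (simp add: abs_if)

lemma l1_dist_add_l1_dist_reflect_le:
  fixes a b x y :: "real ^ 'n"
  assumes "x \<in> cbox a b" "y \<in> cbox a b"
  shows "(\<Sum>k\<in>UNIV. \<bar>x $ k - y $ k\<bar>) + (\<Sum>k\<in>UNIV. \<bar>(a + b - x) $ k - y $ k\<bar>)
           \<le> (\<Sum>k\<in>UNIV. b $ k - a $ k)"
  unfolding sum.distrib[symmetric]
proof (rule sum_mono)
  fix k
  show "\<bar>x $ k - y $ k\<bar> + \<bar>(a + b - x) $ k - y $ k\<bar> \<le> b $ k - a $ k"
    using assms abs_diff_add_abs_reflect_diff_le[of "a $ k" "x $ k" "b $ k" "y $ k"]
    by (simp add: mem_box_cart)
qed

lemma abs_add_abs_reflect_le_of_lipschitz_l1: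
  fixes f :: "real ^ 'n \<Rightarrow> real"
  assumes lip: "\<forall>x\<in>cbox a b. \<forall>x'\<in>cbox a b. \<bar>f x - f x'\<bar> \<le> L * (\<Sum>k\<in>UNIV. \<bar>x $ k - x' $ k\<bar>)"
    and "0 \<le> L" and y: "y \<in> cbox a b" and "f y = 0" and x: "x \<in> cbox a b"
  shows "\<bar>f x\<bar> + \<bar>f (a + b - x)\<bar> \<le> L * (\<Sum>k\<in>UNIV. b $ k - a $ k)"
proof -
  have x': "a + b - x \<in> cbox a b"
    using x by (simp add: mem_box_cart)
  have "\<bar>f x\<bar> \<le> L * (\<Sum>k\<in>UNIV. \<bar>x $ k - y $ k\<bar>)"
    using lip x y \<open>f y = 0\<close> by force
  moreover have "\<bar>f (a + b - x)\<bar> \<le> L * (\<Sum>k\<in>UNIV. \<bar>(a + b - x) $ k - y $ k\<bar>)"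
    using lip x' y \<open>f y = 0\<close> by force
  ultimately have "\<bar>f x\<bar> + \<bar>f (a + b - x)\<bar>
      \<le> L * ((\<Sum>k\<in>UNIV. \<bar>x $ k - y $ k\<bar>) + (\<Sum>k\<in>UNIV. \<bar>(a + b - x) $ k - y $ k\<bar>))"
    by (simp add: distrib_left)
  also have "\<dots> \<le> L * (\<Sum>k\<in>UNIV. b $ k - a $ k)"
    using l1_dist_add_l1_dist_reflect_le[OF x y] \<open>0 \<le> L\<close> by (rule mult_left_mono)
  finally show ?thesis .
qed

theorem lemma2:
  fixes A :: "real ^ 'n" and f :: "real ^ 'n \<Rightarrow> real" and L :: real and y :: "real ^ 'n"
  assumes Apos: "\<forall>k. A $ k > 0"
    and lip: "\<forall>x\<in>cbox 0 A. \<forall>x'\<in>cbox 0 A. \<bar>f x - f x'\<bar> \<le> L * (\<Sum>k\<in>UNIV. \<bar>x $ k - x' $ k\<bar>)"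
    and y: "y \<in> cbox 0 A" and fy: "f y = 0"
  shows "(LINT x : cbox 0 A | lborel. \<bar>f x\<bar>)
           \<le> L / 2 * (\<Prod>k\<in>UNIV. A $ k) * (\<Sum>k\<in>UNIV. A $ k) \<and>
         (\<forall>\<epsilon>. (\<forall>k. A $ k = \<epsilon>) \<longrightarrow>
           (LINT x : cbox 0 A | lborel. \<bar>f x\<bar>) \<le> \<epsilon> ^ (CARD('n) + 1) * (L * real CARD('n) / 2))"
proof -
  have corners: "0 \<in> cbox 0 A" "A \<in> cbox 0 A"
    using Apos by (auto simp: mem_box_cart less_imp_le)
  have sum_A: "(\<Sum>k\<in>UNIV. \<bar>A $ k - 0 $ k\<bar>) = (\<Sum>k\<in>UNIV. A $ k)"
    using Apos by (intro sum.cong) (auto simp: less_imp_le)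
  have "0 \<le> L * (\<Sum>k\<in>UNIV. A $ k)"
    using lip corners unfolding sum_A[symmetric] by (meson abs_ge_zero order_trans)
  moreover have "0 < (\<Sum>k\<in>UNIV. A $ k)"
    using Apos by (simp add: sum_pos)
  ultimately have "0 \<le> L"
    by (simp add: zero_le_mult_iff)
  have "\<bar>f x\<bar> + \<bar>f (0 + A - x)\<bar> \<le> L * (\<Sum>k\<in>UNIV. A $ k)" if "x \<in> cbox 0 A" for x
    using abs_add_abs_reflect_le_of_lipschitz_l1[OF lip \<open>0 \<le> L\<close> y fy that] by simp
  then have "(LINT x : cbox 0 A | lborel. \<bar>f x\<bar>)
      \<le> L * (\<Sum>k\<in>UNIV. A $ k) / 2 * measure lborel (cbox 0 A)"
    using \<open>0 \<le> L * (\<Sum>k\<in>UNIV. A $ k)\<close> by (rule set_integral_le_of_reflect_add_le)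
  also have "measure lborel (cbox 0 A) = (\<Prod>k\<in>UNIV. A $ k)"
    using corners by (subst content_cbox_cart) auto
  finally have "(LINT x : cbox 0 A | lborel. \<bar>f x\<bar>)
      \<le> L / 2 * (\<Prod>k\<in>UNIV. A $ k) * (\<Sum>k\<in>UNIV. A $ k)"
    by (simp add: field_simps)
  moreover have "L / 2 * (\<Prod>k\<in>UNIV. A $ k) * (\<Sum>k\<in>UNIV. A $ k)
      = \<epsilon> ^ (CARD('n) + 1) * (L * real CARD('n) / 2)" if "\<forall>k. A $ k = \<epsilon>" for \<epsilon>
    using that by simp
  ultimately show ?thesis
    by metis
qed

end
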